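(* Let $0<T\le1$, let $L$ be an invariant intrinsic location functional and $\mathbf X$ a periodic stationary process with period $1$. Then the càdlàg density $f^{\mathbf X}_{L,T}$ of $L(\mathbf X,[0,T])$ on $(0,T)$ satisfies $f^{\mathbf X}_{L,T}(t)\ge 1$ for all $t\in(0,T)$.
   Context: Let $H$ be a set of functions $\mathbb R\to\mathbb R$ with period $1$, invariant under shifts ($\theta_cg(x)=g(x+c)$), with the cylindrical $\sigma$-field; $\mathcal I$ is the set of compact intervals $[a,b]$, $a<b$. An intrinsic location functional is a map $L:H\times\mathcal I\to\mathbb R\cup\{\infty\}$ such that: (i) $L(\cdot,I)$ is measurable; (ii) $L(g,I)\in I\cup\{\infty\}$; (iii) $L(g,I)=L(\theta_cg,I-c)+c$ (with $\infty+c=\infty$); (iv) if $I_2\subseteq I_1$ and $L(g,I_1)\in I_2$ then $L(g,I_2)=L(g,I_1)$; (v) if $I_2\subseteq I_1$ and $L(g,I_2)\ne\infty$ then $L(g,I_1)\neq\infty$. It is called invariant if moreover $L(g,I)\ne\infty$ for all $g,I$, and $L(g,[0,1])=L(g,[a,a+1])\pmod 1$ for all $a\in\mathbb R$, $g\in H$. A periodic stationary process with period $1$ is a stationary process with continuous sample paths of period $1$ lying in $H$. The law of $L(\mathbf X,[0,T])$ restricted to $(0,T)$ is absolutely continuous with a càdlàg density $f^{\mathbf X}_{L,T}$. *)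

theory Defs
  imports "HOL-Probability.Probability"
begin

definition shift :: "real \<Rightarrow> (real \<Rightarrow> real) \<Rightarrow> (real \<Rightarrow> real)" where
  "shift c g = (\<lambda>x. g (x + c))"

definition periodic_shift_space :: "(real \<Rightarrow> real) set \<Rightarrow> bool" where
  "periodic_shift_space H \<longleftrightarrow>
     (\<forall>g\<in>H. \<forall>x. g (x + 1) = g x) \<and> (\<forall>g\<in>H. \<forall>c. shift c g \<in> H)"

definition cyl_space :: "(real \<Rightarrow> real) set \<Rightarrow> (real \<Rightarrow> real) measure" where
  "cyl_space H = restrict_space (Pi\<^sub>M UNIV (\<lambda>_. borel)) H"

text \<open>An intrinsic location functional.  The compact interval [a,b] (a < b) is
  represented by the pair of endpoints; the value infinity is the ereal PInfty.\<close>
definition intrinsic_location ::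
  "(real \<Rightarrow> real) set \<Rightarrow> ((real \<Rightarrow> real) \<Rightarrow> real \<Rightarrow> real \<Rightarrow> ereal) \<Rightarrow> bool" where
  "intrinsic_location H L \<longleftrightarrow>
     (\<forall>a b. a < b \<longrightarrow> (\<lambda>g. L g a b) \<in> borel_measurable (cyl_space H)) \<and>
     (\<forall>g\<in>H. \<forall>a b. a < b \<longrightarrow> L g a b \<in> ereal ` {a..b} \<union> {\<infinity>}) \<and>
     (\<forall>g\<in>H. \<forall>a b c. a < b \<longrightarrow> L g a b = L (shift c g) (a - c) (b - c) + ereal c) \<and>
     (\<forall>g\<in>H. \<forall>a1 b1 a2 b2. a1 < b1 \<longrightarrow> a2 < b2 \<longrightarrow> a1 \<le> a2 \<longrightarrow> b2 \<le> b1 \<longrightarrow>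
          L g a1 b1 \<in> ereal ` {a2..b2} \<longrightarrow> L g a2 b2 = L g a1 b1) \<and>
     (\<forall>g\<in>H. \<forall>a1 b1 a2 b2. a1 < b1 \<longrightarrow> a2 < b2 \<longrightarrow> a1 \<le> a2 \<longrightarrow> b2 \<le> b1 \<longrightarrow>
          L g a2 b2 \<noteq> \<infinity> \<longrightarrow> L g a1 b1 \<noteq> \<infinity>)"

definition invariant_intrinsic_location ::
  "(real \<Rightarrow> real) set \<Rightarrow> ((real \<Rightarrow> real) \<Rightarrow> real \<Rightarrow> real \<Rightarrow> ereal) \<Rightarrow> bool" where
  "invariant_intrinsic_location H L \<longleftrightarrow>
     intrinsic_location H L \<and>
     (\<forall>g\<in>H. \<forall>a b. a < b \<longrightarrow> L g a b \<noteq> \<infinity>) \<and>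
     (\<forall>g\<in>H. \<forall>a. real_of_ereal (L g 0 1) - real_of_ereal (L g a (a + 1)) \<in> \<int>)"

definition periodic_stationary_process ::
  "'w measure \<Rightarrow> (real \<Rightarrow> real) set \<Rightarrow> ('w \<Rightarrow> real \<Rightarrow> real) \<Rightarrow> bool" where
  "periodic_stationary_process M H X \<longleftrightarrow>
     prob_space M \<and>
     X \<in> measurable M (cyl_space H) \<and>
     (\<forall>\<omega>\<in>space M. continuous_on UNIV (X \<omega>) \<and> (\<forall>x. X \<omega> (x + 1) = X \<omega> x)) \<and>
     (\<forall>c. distr M (cyl_space H) (\<lambda>\<omega>. shift c (X \<omega>)) = distr M (cyl_space H) X)"

definition cadlag_on :: "real set \<Rightarrow> (real \<Rightarrow> real) \<Rightarrow> bool" where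
  "cadlag_on S f \<longleftrightarrow>
     (\<forall>t\<in>S. continuous (at_right t) f \<and> (\<exists>l. (f \<longlongrightarrow> l) (at_left t)))"

end

theory Submission
  imports Defs
begin

text \<open>Let \<open>\<tau>(g) = L(g,[0,1])\<close>. Invariance makes \<open>\<tau>(\<theta>\<^sub>c g) = \<tau>(g) - c\<close> modulo 1,
  so by stationarity \<open>\<tau>(\<^bold>X)\<close> is uniformly distributed modulo 1: each of the \<open>n\<close> bins
  \<open>[k/n, (k+1)/n)\<close> of the circle has probability \<open>1/n\<close>. If such a bin lies in \<open>(0,T]\<close>,
  then on the event \<open>\<tau>(\<^bold>X)\<close> in the bin the restriction property (iv) gives
  \<open>L(\<^bold>X,[0,T]) = \<tau>(\<^bold>X)\<close>, so the density integrates to at least the length of the bin.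
  Since bins exist immediately to the right of every \<open>t \<in> (0,T)\<close>, right-continuity of
  the density yields \<open>f(t) \<ge> 1\<close>.\<close>

definition period_location ::
  "((real \<Rightarrow> real) \<Rightarrow> real \<Rightarrow> real \<Rightarrow> ereal) \<Rightarrow> (real \<Rightarrow> real) \<Rightarrow> real" where
  "period_location L g = real_of_ereal (L g 0 1)"

definition bin_index :: "nat \<Rightarrow> real \<Rightarrow> int" where
  "bin_index n x = \<lfloor>real n * x\<rfloor> mod int n"

lemma bin_index_bounds:
  assumes "n > 0"
  shows "0 \<le> bin_index n x" and "bin_index n x < int n"
  using assms by (simp_all add: bin_index_def)

lemma bin_index_shift_eq_0_iff:
  fixes z :: int
  assumes "n > 0" "k < n"
  shows "bin_index n (x - real k / real n + real_of_int z) = 0 \<longleftrightarrow> bin_index n x = int k"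
proof -
  have "real n * (x - real k / real n + real_of_int z) = real n * x + real_of_int (int n * z - int k)"
    using assms by (simp add: field_simps)
  then have "\<lfloor>real n * (x - real k / real n + real_of_int z)\<rfloor> = \<lfloor>real n * x\<rfloor> + (int n * z - int k)"
    by (metis floor_add_int)
  also have "\<dots> = (\<lfloor>real n * x\<rfloor> - int k) + z * int n"
    by simp
  finally have shifted: "bin_index n (x - real k / real n + real_of_int z) = (\<lfloor>real n * x\<rfloor> - int k) mod int n"
    unfolding bin_index_def by (simp only: mod_mult_self1)
  have "(\<lfloor>real n * x\<rfloor> - int k) mod int n = 0 \<longleftrightarrow> \<lfloor>real n * x\<rfloor> mod int n = int k mod int n"
    by (simp only: mod_eq_dvd_iff dvd_eq_mod_eq_0)
  then show ?thesis
    unfolding shifted using assms(2) by (simp add: bin_index_def)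
qed

lemma bin_index_eq_imp_bounds:
  assumes "0 \<le> x" "x \<le> 1" "1 \<le> k" "k < n" "bin_index n x = int k"
  shows "real k / real n \<le> x" and "x < (real k + 1) / real n"
proof -
  have "\<lfloor>real n * x\<rfloor> \<le> \<lfloor>real n\<rfloor>"
    using assms by (intro floor_mono) (simp add: mult_left_le)
  moreover have "\<lfloor>real n * x\<rfloor> \<noteq> int n"
    using assms by (auto simp: bin_index_def)
  moreover have "0 \<le> \<lfloor>real n * x\<rfloor>"
    using assms by simp
  ultimately have "\<lfloor>real n * x\<rfloor> = int k"
    using assms by (simp add: bin_index_def)
  then have "real k \<le> real n * x" "real n * x < real k + 1"
    by linarith+
  then show "real k / real n \<le> x" "x < (real k + 1) / real n"
    using assms by (simp_all add: field_simps)
qed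

lemma exists_grid_interval:
  fixes t \<delta> :: real
  assumes "0 < t" "0 < \<delta>"
  shows "\<exists>n k :: nat. 0 < n \<and> 1 \<le> k \<and> t \<le> real k / real n \<and> (real k + 1) / real n \<le> t + \<delta>"
proof -
  obtain n :: nat where n: "2 / \<delta> < real n"
    using reals_Archimedean2 by blast
  moreover have "0 < 2 / \<delta>"
    using assms by simp
  ultimately have "0 < real n"
    by linarith
  then have "0 < n" "2 / real n < \<delta>"
    using n assms by (auto simp: field_simps)
  have "0 < t * real n"
    using assms \<open>0 < n\<close> by simp
  define k where "k = nat \<lceil>t * real n\<rceil>"
  have "real k = real_of_int \<lceil>t * real n\<rceil>"
    using \<open>0 < t * real n\<close> by (simp add: k_def)
  then have "t * real n \<le> real k" "real k < t * real n + 1"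
    by linarith+
  with \<open>0 < t * real n\<close> show ?thesis
    using \<open>0 < n\<close> \<open>2 / real n < \<delta>\<close>
    by (intro exI[of _ n] exI[of _ k]) (auto simp: field_simps)
qed

lemma right_continuous_density_ge_one:
  fixes f :: "real \<Rightarrow> real"
  assumes "continuous (at_right t) f"
    and "\<And>\<delta>. 0 < \<delta> \<Longrightarrow> \<exists>a b. t \<le> a \<and> a < b \<and> b \<le> t + \<delta> \<and>
           ennreal (b - a) \<le> (\<integral>\<^sup>+x\<in>{a..<b}. ennreal (f x) \<partial>lborel)"
  shows "1 \<le> f t"
proof (rule ccontr)
  assume "\<not> 1 \<le> f t"
  define c where "c = (max (f t) 0 + 1) / 2"
  have c: "0 < c" "c < 1" "f t < c"
    using \<open>\<not> 1 \<le> f t\<close> unfolding c_def by auto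
  have "(f \<longlongrightarrow> f t) (at_right t)"
    using assms(1) by (simp add: continuous_within)
  then have "eventually (\<lambda>x. f x < c) (at_right t)"
    using c(3) by (rule order_tendstoD(2))
  then obtain d where "t < d" and below: "\<And>x. t < x \<Longrightarrow> x < d \<Longrightarrow> f x < c"
    by (auto simp: eventually_at_right_field)
  then obtain a b where ab: "t \<le> a" "a < b" "b \<le> d"
    and heavy: "ennreal (b - a) \<le> (\<integral>\<^sup>+x\<in>{a..<b}. ennreal (f x) \<partial>lborel)"
    using assms(2)[of "d - t"] by auto
  have "f x \<le> c" if "x \<in> {a..<b}" for x
  proof (cases "x = t")
    case False
    then show ?thesis
      using that ab below by (simp add: less_imp_le)
  qed (use c(3) in simp)
  then have "(\<integral>\<^sup>+x\<in>{a..<b}. ennreal (f x) \<partial>lborel) \<le> (\<integral>\<^sup>+x. ennreal c * indicator {a..<b} x \<partial>lborel)"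
    by (intro nn_integral_mono) (simp add: indicator_def ennreal_leI)
  also have "\<dots> = ennreal (c * (b - a))"
    using ab c by (simp add: nn_integral_cmult_indicator ennreal_mult)
  finally have "ennreal (b - a) \<le> ennreal (c * (b - a))"
    using heavy by (rule order_trans[rotated])
  then have "b - a \<le> c * (b - a)"
    using ab c by (simp add: ennreal_le_iff)
  then show False
    using ab c by (simp add: mult_le_cancel_right1)
qed

lemma (in prob_space) prob_equiprobable_partition:
  assumes "E ` {..<n} \<subseteq> events" "disjoint_family_on E {..<n}"
    and "(\<Union>j<n. E j) = space M" "\<And>j. j < n \<Longrightarrow> prob (E j) = p"
  shows "p = 1 / real n"
proof -
  have "1 = prob (\<Union>j<n. E j)"
    using assms(3) prob_space by simp
  also have "\<dots> = (\<Sum>j<n. prob (E j))"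
    using assms(1,2) by (intro finite_measure_finite_Union) auto
  also have "\<dots> = real n * p"
    using assms(4) by simp
  finally show ?thesis
    by (cases "n = 0") (simp_all add: field_simps)
qed

lemma invariant_intrinsic_locationD:
  assumes "invariant_intrinsic_location H L"
  shows "\<forall>a b. a < b \<longrightarrow> (\<lambda>g. L g a b) \<in> borel_measurable (cyl_space H)"
    and "\<forall>g\<in>H. \<forall>a b. a < b \<longrightarrow> L g a b \<in> ereal ` {a..b} \<union> {\<infinity>}"
    and "\<forall>g\<in>H. \<forall>a b c. a < b \<longrightarrow> L g a b = L (shift c g) (a - c) (b - c) + ereal c"
    and "\<forall>g\<in>H. \<forall>a1 b1 a2 b2. a1 < b1 \<longrightarrow> a2 < b2 \<longrightarrow> a1 \<le> a2 \<longrightarrow> b2 \<le> b1 \<longrightarrow>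
          L g a1 b1 \<in> ereal ` {a2..b2} \<longrightarrow> L g a2 b2 = L g a1 b1"
    and "\<forall>g\<in>H. \<forall>a b. a < b \<longrightarrow> L g a b \<noteq> \<infinity>"
    and "\<forall>g\<in>H. \<forall>a. real_of_ereal (L g 0 1) - real_of_ereal (L g a (a + 1)) \<in> \<int>"
  using assms unfolding invariant_intrinsic_location_def intrinsic_location_def
  by - (elim conjE, assumption)+

lemma invariant_location_measurable:
  assumes "invariant_intrinsic_location H L" "a < b"
  shows "(\<lambda>g. L g a b) \<in> borel_measurable (cyl_space H)"
  using invariant_intrinsic_locationD(1)[OF assms(1)] assms(2) by blast

lemma invariant_location_in_interval:
  assumes "invariant_intrinsic_location H L" "g \<in> H" "a < b"
  shows "L g a b \<in> ereal ` {a..b}"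
  using invariant_intrinsic_locationD(2,5)[OF assms(1)] assms(2,3) by blast

lemma invariant_location_shift:
  assumes "invariant_intrinsic_location H L" "g \<in> H" "a < b"
  shows "L g a b = L (shift c g) (a - c) (b - c) + ereal c"
  using invariant_intrinsic_locationD(3)[OF assms(1)] assms(2,3) by blast

lemma invariant_location_restrict:
  assumes "invariant_intrinsic_location H L" "g \<in> H" "a1 < b1" "a2 < b2" "a1 \<le> a2" "b2 \<le> b1"
    and "L g a1 b1 \<in> ereal ` {a2..b2}"
  shows "L g a2 b2 = L g a1 b1"
  using invariant_intrinsic_locationD(4)[OF assms(1)] assms(2-) by blast

lemma invariant_location_period:
  assumes "invariant_intrinsic_location H L" "g \<in> H"
  shows "period_location L g - real_of_ereal (L g a (a + 1)) \<in> \<int>"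
  using invariant_intrinsic_locationD(6)[OF assms(1)] assms(2) by (simp add: period_location_def)

lemma
  assumes "invariant_intrinsic_location H L" "g \<in> H"
  shows location_0_1_eq: "L g 0 1 = ereal (period_location L g)"
    and period_location_bounds: "0 \<le> period_location L g" "period_location L g \<le> 1"
proof -
  obtain r where "L g 0 1 = ereal r" "r \<in> {0..1}"
    using invariant_location_in_interval[OF assms, of 0 1] by auto
  then show "L g 0 1 = ereal (period_location L g)"
    "0 \<le> period_location L g" "period_location L g \<le> 1"
    by (simp_all add: period_location_def)
qed

lemma period_location_shift:
  assumes "periodic_shift_space H" "invariant_intrinsic_location H L" "g \<in> H"
  obtains z :: int where
    "period_location L (shift c g) = period_location L g - c + real_of_int z"
proof -
  have "shift c g \<in> H"
    using assms(1,3) unfolding periodic_shift_space_def by blast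
  have "L g c (c + 1) = L (shift c g) 0 1 + ereal c"
    using invariant_location_shift[OF assms(2,3), of c "c + 1" c] by simp
  then have "real_of_ereal (L g c (c + 1)) = period_location L (shift c g) + c"
    using location_0_1_eq[OF assms(2) \<open>shift c g \<in> H\<close>] by simp
  moreover have "period_location L g - real_of_ereal (L g c (c + 1)) \<in> \<int>"
    using invariant_location_period[OF assms(2,3)] .
  ultimately obtain z where "period_location L g - (period_location L (shift c g) + c) = real_of_int z"
    by (auto elim: Ints_cases)
  then show ?thesis
    by (intro that[of "- z"]) simp
qed

lemma location_eq_period_location:
  assumes "invariant_intrinsic_location H L" "g \<in> H" "0 < T" "T \<le> 1"
    and "period_location L g \<le> T"
  shows "L g 0 T = ereal (period_location L g)"
proof -
  have "L g 0 1 \<in> ereal ` {0..T}"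
    using assms location_0_1_eq[OF assms(1,2)] period_location_bounds[OF assms(1,2)] by simp
  then have "L g 0 T = L g 0 1"
    using assms(3,4) by (intro invariant_location_restrict[OF assms(1,2)]) auto
  then show ?thesis
    using location_0_1_eq[OF assms(1,2)] by simp
qed

lemma measurable_bin_index_period_location:
  assumes "invariant_intrinsic_location H L"
  shows "(\<lambda>g. bin_index n (period_location L g)) \<in> measurable (cyl_space H) (count_space UNIV)"
proof -
  have "(\<lambda>g. L g 0 1) \<in> borel_measurable (cyl_space H)"
    using invariant_location_measurable[OF assms] by simp
  then show ?thesis
    unfolding bin_index_def period_location_def by measurable
qed

lemma space_cyl_space [simp]: "space (cyl_space H) = H"
  by (simp add: cyl_space_def space_restrict_space space_PiM)

locale stationary_location =
  fixes H :: "(real \<Rightarrow> real) set"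
    and L :: "(real \<Rightarrow> real) \<Rightarrow> real \<Rightarrow> real \<Rightarrow> ereal"
    and M :: "'w measure"
    and X :: "'w \<Rightarrow> real \<Rightarrow> real"
  assumes shift_space: "periodic_shift_space H"
    and location: "invariant_intrinsic_location H L"
    and process: "periodic_stationary_process M H X"
begin

sublocale prob_space M
  using process by (simp add: periodic_stationary_process_def)

lemma measurable_X: "X \<in> measurable M (cyl_space H)"
  using process by (simp add: periodic_stationary_process_def)

lemma X_in_H: "\<omega> \<in> space M \<Longrightarrow> X \<omega> \<in> H"
  using measurable_space[OF measurable_X] by simp

lemma shift_X_in_H: "\<omega> \<in> space M \<Longrightarrow> shift c (X \<omega>) \<in> H"
  using shift_space X_in_H unfolding periodic_shift_space_def by blast

lemma measurable_shift_X: "(\<lambda>\<omega>. shift c (X \<omega>)) \<in> measurable M (cyl_space H)"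
proof -
  have "X \<in> measurable M (Pi\<^sub>M UNIV (\<lambda>_. borel))"
    using measurable_X unfolding cyl_space_def measurable_restrict_space2_iff by blast
  then have "(\<lambda>\<omega>. X \<omega> y) \<in> borel_measurable M" for y
    by measurable
  then have "(\<lambda>\<omega> x. X \<omega> (x + c)) \<in> measurable M (Pi\<^sub>M UNIV (\<lambda>_. borel))"
    by (intro measurable_PiM_single') auto
  then show ?thesis
    using shift_X_in_H unfolding cyl_space_def measurable_restrict_space2_iff shift_def
    by auto
qed

lemma emeasure_shift_X:
  assumes "B \<in> sets (cyl_space H)"
  shows "emeasure M {\<omega>\<in>space M. shift c (X \<omega>) \<in> B} = emeasure M {\<omega>\<in>space M. X \<omega> \<in> B}"
proof -
  have "distr M (cyl_space H) (\<lambda>\<omega>. shift c (X \<omega>)) = distr M (cyl_space H) X"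
    using process by (simp add: periodic_stationary_process_def)
  then have "emeasure (distr M (cyl_space H) (\<lambda>\<omega>. shift c (X \<omega>))) B
      = emeasure (distr M (cyl_space H) X) B"
    by simp
  then show ?thesis
    using assms measurable_shift_X measurable_X
    by (simp add: emeasure_distr vimage_def Int_def conj_commute)
qed

definition bin_event :: "nat \<Rightarrow> nat \<Rightarrow> 'w set" where
  "bin_event n k = {\<omega>\<in>space M. bin_index n (period_location L (X \<omega>)) = int k}"

lemma bin_event_in_events: "bin_event n k \<in> events"
proof -
  have "{\<omega>\<in>space M. bin_index n (period_location L (X \<omega>)) = int k} \<in> events"
    using measurable_X measurable_bin_index_period_location[OF location] by measurable
  then show ?thesis
    by (simp add: bin_event_def)
qed

lemma prob_bin_event_eq:
  assumes "0 < n" "k < n"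
  shows "prob (bin_event n k) = prob (bin_event n 0)"
proof -
  let ?c = "real k / real n"
  let ?B = "{g \<in> H. bin_index n (period_location L g) = 0}"
  have "{g \<in> space (cyl_space H). bin_index n (period_location L g) = 0} \<in> sets (cyl_space H)"
    using measurable_bin_index_period_location[OF location] by measurable
  then have "?B \<in> sets (cyl_space H)"
    by simp
  have shifted: "{\<omega>\<in>space M. shift ?c (X \<omega>) \<in> ?B} = bin_event n k"
  proof -
    have "bin_index n (period_location L (shift ?c (X \<omega>))) = 0 \<longleftrightarrow>
          bin_index n (period_location L (X \<omega>)) = int k" if \<omega>: "\<omega> \<in> space M" for \<omega>
    proof -
      obtain z where "period_location L (shift ?c (X \<omega>)) = period_location L (X \<omega>) - ?c + real_of_int z"
        using period_location_shift[OF shift_space location X_in_H[OF \<omega>]] by blast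
      then show ?thesis
        using bin_index_shift_eq_0_iff[OF assms] by simp
    qed
    then show ?thesis
      using shift_X_in_H by (auto simp: bin_event_def)
  qed
  have "emeasure M (bin_event n k) = emeasure M {\<omega>\<in>space M. shift ?c (X \<omega>) \<in> ?B}"
    by (simp only: shifted)
  also have "\<dots> = emeasure M {\<omega>\<in>space M. X \<omega> \<in> ?B}"
    using \<open>?B \<in> sets (cyl_space H)\<close> by (rule emeasure_shift_X)
  also have "{\<omega>\<in>space M. X \<omega> \<in> ?B} = bin_event n 0"
    using X_in_H by (auto simp: bin_event_def)
  finally show ?thesis
    by (simp add: measure_def)
qed

lemma prob_bin_event:
  assumes "0 < n" "k < n"
  shows "prob (bin_event n k) = 1 / real n"
proof -
  have "prob (bin_event n 0) = 1 / real n"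
  proof (rule prob_equiprobable_partition)
    show "bin_event n ` {..<n} \<subseteq> events"
      using bin_event_in_events by blast
    show "disjoint_family_on (bin_event n) {..<n}"
      by (auto simp: disjoint_family_on_def bin_event_def)
    show "(\<Union>j<n. bin_event n j) = space M"
    proof (intro equalityI subsetI)
      fix \<omega> assume \<omega>: "\<omega> \<in> space M"
      let ?j = "nat (bin_index n (period_location L (X \<omega>)))"
      have "?j < n" "bin_index n (period_location L (X \<omega>)) = int ?j"
        using bin_index_bounds[OF \<open>0 < n\<close>] by (auto simp: nat_less_iff)
      then show "\<omega> \<in> (\<Union>j<n. bin_event n j)"
        using \<omega> unfolding bin_event_def by (intro UN_I[of ?j]) simp_all
    qed (auto simp: bin_event_def)
    show "prob (bin_event n j) = prob (bin_event n 0)" if "j < n" for j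
      using prob_bin_event_eq[OF \<open>0 < n\<close> that] .
  qed
  then show ?thesis
    using prob_bin_event_eq[OF assms] by simp
qed

lemma location_event_in_events:
  assumes "0 < T"
  shows "{\<omega>\<in>space M. L (X \<omega>) 0 T \<in> ereal ` {a..<b}} \<in> events"
proof -
  have "(\<lambda>g. L g 0 T) \<in> borel_measurable (cyl_space H)"
    using invariant_location_measurable[OF location assms] .
  then have "(\<lambda>\<omega>. L (X \<omega>) 0 T) \<in> borel_measurable M"
    using measurable_X by measurable
  then have "{\<omega>\<in>space M. ereal a \<le> L (X \<omega>) 0 T \<and> L (X \<omega>) 0 T < ereal b} \<in> events"
    by measurable
  moreover have "z \<in> ereal ` {a..<b} \<longleftrightarrow> ereal a \<le> z \<and> z < ereal b" for z
    by (cases z) auto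
  ultimately show ?thesis
    by simp
qed

lemma bin_event_subset_location_event:
  assumes "k < n" "1 \<le> k" "0 < T" "T \<le> 1" "(real k + 1) / real n \<le> T"
  shows "bin_event n k \<subseteq> {\<omega>\<in>space M. L (X \<omega>) 0 T \<in> ereal ` {real k / real n..<(real k + 1) / real n}}"
proof
  fix \<omega> assume "\<omega> \<in> bin_event n k"
  then have \<omega>: "\<omega> \<in> space M" and bin: "bin_index n (period_location L (X \<omega>)) = int k"
    by (auto simp: bin_event_def)
  let ?\<tau> = "period_location L (X \<omega>)"
  have "real k / real n \<le> ?\<tau>" "?\<tau> < (real k + 1) / real n"
    using bin_index_eq_imp_bounds[OF period_location_bounds[OF location X_in_H[OF \<omega>]] \<open>1 \<le> k\<close> \<open>k < n\<close> bin]
    by auto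
  moreover have "L (X \<omega>) 0 T = ereal ?\<tau>"
    using location_eq_period_location[OF location X_in_H[OF \<omega>] \<open>0 < T\<close> \<open>T \<le> 1\<close>] calculation assms(5)
    by simp
  ultimately show "\<omega> \<in> {\<omega>\<in>space M. L (X \<omega>) 0 T \<in> ereal ` {real k / real n..<(real k + 1) / real n}}"
    using \<omega> by auto
qed

lemma emeasure_location_grid_interval_ge:
  assumes "0 < n" "1 \<le> k" "0 < T" "T \<le> 1" "(real k + 1) / real n \<le> T"
  shows "ennreal (1 / real n)
    \<le> emeasure M {\<omega>\<in>space M. L (X \<omega>) 0 T \<in> ereal ` {real k / real n..<(real k + 1) / real n}}"
proof -
  have "(real k + 1) / real n \<le> 1"
    using assms(4,5) by linarith
  then have "k < n"
    using assms(1) by (simp add: field_simps)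
  then have "ennreal (1 / real n) = emeasure M (bin_event n k)"
    using prob_bin_event[OF \<open>0 < n\<close>] bin_event_in_events by (simp add: emeasure_eq_measure)
  also have "\<dots> \<le> emeasure M {\<omega>\<in>space M. L (X \<omega>) 0 T \<in> ereal ` {real k / real n..<(real k + 1) / real n}}"
    using bin_event_subset_location_event[OF \<open>k < n\<close> assms(2-5)] location_event_in_events[OF \<open>0 < T\<close>]
    by (rule emeasure_mono)
  finally show ?thesis .
qed

lemma exists_heavy_grid_interval:
  assumes "0 < T" "T \<le> 1" "t \<in> {0<..<T}" "0 < \<delta>"
    and density: "\<forall>A\<in>sets borel. A \<subseteq> {0<..<T} \<longrightarrow>
      emeasure M {\<omega>\<in>space M. L (X \<omega>) 0 T \<in> ereal ` A} = (\<integral>\<^sup>+x\<in>A. ennreal (f x) \<partial>lborel)"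
  shows "\<exists>a b. t \<le> a \<and> a < b \<and> b \<le> t + \<delta> \<and>
    ennreal (b - a) \<le> (\<integral>\<^sup>+x\<in>{a..<b}. ennreal (f x) \<partial>lborel)"
proof -
  obtain n k :: nat where nk: "0 < n" "1 \<le> k" "t \<le> real k / real n"
    "(real k + 1) / real n \<le> t + min \<delta> (T - t)"
    using exists_grid_interval[of t "min \<delta> (T - t)"] assms(3,4) by auto
  let ?A = "{real k / real n..<(real k + 1) / real n}"
  have "?A \<subseteq> {0<..<T}"
    using nk assms(3) by auto
  have "ennreal (1 / real n) \<le> emeasure M {\<omega>\<in>space M. L (X \<omega>) 0 T \<in> ereal ` ?A}"
    using nk(4) by (intro emeasure_location_grid_interval_ge[OF nk(1,2) assms(1,2)]) auto
  also have "\<dots> = (\<integral>\<^sup>+x\<in>?A. ennreal (f x) \<partial>lborel)"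
    using density \<open>?A \<subseteq> {0<..<T}\<close> by simp
  finally have "ennreal (1 / real n) \<le> (\<integral>\<^sup>+x\<in>?A. ennreal (f x) \<partial>lborel)" .
  moreover have "(real k + 1) / real n - real k / real n = 1 / real n"
    by (simp flip: diff_divide_distrib)
  ultimately show ?thesis
    using nk by (intro exI[of _ "real k / real n"] exI[of _ "(real k + 1) / real n"])
      (auto simp: divide_strict_right_mono)
qed

end

theorem mainTheorem6:
  fixes H :: "(real \<Rightarrow> real) set"
    and L :: "(real \<Rightarrow> real) \<Rightarrow> real \<Rightarrow> real \<Rightarrow> ereal"
    and M :: "'w measure"
    and X :: "'w \<Rightarrow> real \<Rightarrow> real"
    and T :: real
    and f :: "real \<Rightarrow> real"
  assumes "periodic_shift_space H"
    and "invariant_intrinsic_location H L"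
    and "periodic_stationary_process M H X"
    and "0 < T" and "T \<le> 1"
    and "cadlag_on {0<..<T} f"
    and "\<forall>A\<in>sets borel. A \<subseteq> {0<..<T} \<longrightarrow>
           emeasure M {\<omega>\<in>space M. L (X \<omega>) 0 T \<in> ereal ` A} = (\<integral>\<^sup>+x\<in>A. ennreal (f x) \<partial>lborel)"
  shows "\<forall>t\<in>{0<..<T}. f t \<ge> 1"
proof
  fix t assume t: "t \<in> {0<..<T}"
  interpret stationary_location H L M X
    using assms(1-3) by unfold_locales
  show "1 \<le> f t"
  proof (rule right_continuous_density_ge_one[where f = f and t = t])
    show "continuous (at_right t) f"
      using assms(6) t by (simp add: cadlag_on_def)
    show "\<exists>a b. t \<le> a \<and> a < b \<and> b \<le> t + \<delta> \<and>
        ennreal (b - a) \<le> (\<integral>\<^sup>+x\<in>{a..<b}. ennreal (f x) \<partial>lborel)" if "0 < \<delta>" for \<delta>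
      using exists_heavy_grid_interval[OF assms(4,5) t that assms(7)] .
  qed
qed

end
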